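(* Let $n,m,p,N\in\mathbb{N}_+$, $B\in\mathbb{R}^{n\times m}$, $C\in\mathbb{R}^{p\times n}$ of full column rank, $x_0\in\mathbb{R}^n$, $r_1,\dots,r_N\in\mathbb{R}^p$, $r_0:=Cx_0$, and $\mathcal{S}_{\rm M1}\subseteq\mathbb{R}^{n\times n}\times\mathbb{R}^{m\times N}$. Problem (MOPUL1) is: minimize $\sum_{t=1}^N\|y_t-r_t\|_2$ over $(A,U)\in\mathcal{S}_{\rm M1}$, $U=(u_0,\dots,u_{N-1})$, where $x_t=Ax_{t-1}+Bu_{t-1}$ ($t=1,\dots,N$) and $y_t=Cx_t$; let $v^*_{\rm M1}$ be its optimal value and $\mathcal{F}^*_{\rm M1}$ its optimal solution set. Problem (AMOPUL1) is: minimize $\sum_{t=1}^N\|CAC^{\dagger}r_{t-1}+CBu_{t-1}-r_t\|_2$ over $(A,U)\in\mathcal{S}_{\rm M1}$; let $v^*_{\rm A1}$ be its optimal value. For $\epsilon=(\epsilon_1,\dots,\epsilon_N)\in\mathbb{R}^N_+$ let $\mathcal{Z}_\epsilon:=\{(A,U)\in\mathcal{S}_{\rm M1}: \hat y_0=Cx_0,\ \hat y_t=CAC^{\dagger}\hat y_{t-1}+CBu_{t-1},\ \|\hat y_t-r_t\|_2\le\epsilon_t,\ t=1,\dots,N\}$. For $(A^*,U^* )\in\mathcal{F}^*_{\rm M1}$ with $U^*=(u^*_0,\dots,u^*_{N-1})$, define $\hat y^*_0=Cx_0$, $\hat y^*_t=CA^*C^{\dagger}\hat y^*_{t-1}+CBu^*_{t-1}$,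 $\epsilon^*_t=\|\hat y^*_t-r_t\|_2$, and $\mathcal{Z}^*_{\epsilon}(A^*,U^* ):=\mathcal{Z}_{\epsilon^*}$. If (MOPUL1) is attainable (i.e., $\mathcal{F}^*_{\rm M1}\ne\emptyset$), then $$v^*_{\rm A1}\le(1+\gamma^* )v^*_{\rm M1},\qquad \gamma^*:=\inf_{(A^*,U^* )\in\mathcal{F}^*_{\rm M1}}\ \inf_{(A,U)\in\mathcal{Z}^*_{\epsilon}(A^*,U^* )}\|CAC^{\dagger}\|_2.$$
   Context: $C^{\dagger}$ is the Moore–Penrose inverse of $C$; $\|\cdot\|_2$ is the Euclidean norm for vectors and the spectral norm for matrices. In the paper $\mathcal{S}_{\rm M1}$ is assumed SD representable, though this is not used in the claim. *)

theory Defs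
  imports "HOL-Analysis.Analysis"
begin

definition mp_pinv :: "real^'n^'p \<Rightarrow> real^'p^'n" where
  "mp_pinv C = (THE X. C ** X ** C = C \<and> X ** C ** X = X \<and>
      transpose (C ** X) = C ** X \<and> transpose (X ** C) = X ** C)"

definition spec_norm :: "real^'n^'m \<Rightarrow> real" where
  "spec_norm M = onorm (\<lambda>x. M *v x)"

fun traj :: "real^'n^'n \<Rightarrow> real^'m^'n \<Rightarrow> (nat \<Rightarrow> real^'m) \<Rightarrow> real^'n \<Rightarrow> nat \<Rightarrow> real^'n" where
  "traj A B U x0 0 = x0"
| "traj A B U x0 (Suc t) = A *v traj A B U x0 t + B *v U t"

fun yhat :: "real^'n^'p \<Rightarrow> real^'n^'n \<Rightarrow> real^'m^'n \<Rightarrow> (nat \<Rightarrow> real^'m) \<Rightarrow> real^'n \<Rightarrow> nat \<Rightarrow> real^'p" where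
  "yhat C A B U x0 0 = C *v x0"
| "yhat C A B U x0 (Suc t) = (C ** A ** mp_pinv C) *v yhat C A B U x0 t + (C ** B) *v U t"

definition ref0 :: "real^'n^'p \<Rightarrow> real^'n \<Rightarrow> (nat \<Rightarrow> real^'p) \<Rightarrow> nat \<Rightarrow> real^'p" where
  "ref0 C x0 r t = (if t = 0 then C *v x0 else r t)"

definition obj_M1 where
  "obj_M1 N B C x0 r A U = (\<Sum>t=1..N. norm (C *v traj A B U x0 t - r t))"

definition obj_A1 where
  "obj_A1 N B C x0 r A U = (\<Sum>t=1..N. norm ((C ** A ** mp_pinv C) *v ref0 C x0 r (t - 1)
       + (C ** B) *v U (t - 1) - r t))"

definition F_M1 where
  "F_M1 S N B C x0 r = {(A, U) \<in> S. \<forall>(A', U') \<in> S. obj_M1 N B C x0 r A U \<le> obj_M1 N B C x0 r A' U'}"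

definition Z_eps where
  "Z_eps S N B C x0 r eps = {(A, U) \<in> S. \<forall>t \<in> {1..N}. norm (yhat C A B U x0 t - r t) \<le> eps t}"

definition eps_star where
  "eps_star B C x0 r As Us t = norm (yhat C As B Us x0 t - r t)"

end

theory Submission imports Defs begin

(*
  For C of full column rank the Moore-Penrose inverse C^+ is a left inverse of C, so C A C^+
  maps C x to C A x and the approximate outputs yhat coincide with the true outputs of (MOPUL1).
  Writing d_t = yhat_t - r_t, the t-th residual of (AMOPUL1) equals d_t - C A C^+ d_{t-1},
  where d_0 = 0 because r_0 = C x0 = yhat_0; hence its norm is at most
  |d_t| + |C A C^+| |d_{t-1}|, and summing bounds the (AMOPUL1) objective of any (A, U) by
  (1 + |C A C^+|) times the sum of the |d_t|. On Z_eps for eps = eps_star of an optimal pair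
  (As, Us) that sum is at most the (MOPUL1) objective of (As, Us), which is v*_M1. Taking
  infima gives the claim.
*)

lemma mp_pinv_eqI:
  fixes C :: "real^'n^'p" and X :: "real^'p^'n"
  assumes XC: "X ** C = mat 1" and sym_CX: "transpose (C ** X) = C ** X"
  shows "mp_pinv C = X"
  unfolding mp_pinv_def
proof (rule the_equality)
  show penrose_X: "C ** X ** C = C \<and> X ** C ** X = X \<and>
      transpose (C ** X) = C ** X \<and> transpose (X ** C) = X ** C"
    using XC sym_CX by (simp add: matrix_mul_assoc[symmetric])
  fix Y
  assume penrose_Y: "C ** Y ** C = C \<and> Y ** C ** Y = Y \<and>
      transpose (C ** Y) = C ** Y \<and> transpose (Y ** C) = Y ** C"
  have YC: "Y ** C = mat 1"
    by (metis XC penrose_Y matrix_mul_assoc matrix_mul_lid)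
  have "C ** Y = transpose (C ** X ** C ** Y)"
    using penrose_X penrose_Y by (metis matrix_mul_assoc)
  also have "\<dots> = transpose (C ** Y) ** transpose (C ** X)"
    by (metis matrix_transpose_mul matrix_mul_assoc)
  also have "\<dots> = C ** X"
    using penrose_Y sym_CX by (metis matrix_mul_assoc)
  finally have "X ** C ** Y = X ** C ** X"
    by (simp add: matrix_mul_assoc[symmetric])
  then show "Y = X"
    using XC YC by (simp add: matrix_mul_assoc[symmetric])
qed

lemma gram_matrix_injective:
  fixes C :: "real^'n^'p"
  assumes "inj ((*v) C)"
  shows "inj ((*v) (transpose C ** C))"
proof -
  have "x = 0" if "(transpose C ** C) *v x = 0" for x
  proof -
    have "inner (C *v x) (C *v x) = inner ((transpose C ** C) *v x) x"
      by (metis dot_lmul_matrix matrix_vector_mul_assoc transpose_matrix_vector)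
    then have "C *v x = 0"
      using that by simp
    then show "x = 0"
      using assms by (metis injD matrix_vector_mult_0_right)
  qed
  then show ?thesis
    by (simp add: vec.inj_iff_eq_0)
qed

lemma mp_pinv_left_inverse:
  fixes C :: "real^'n^'p"
  assumes "rank C = CARD('n)"
  shows "mp_pinv C ** C = mat 1"
proof -
  obtain G where G: "G ** (transpose C ** C) = mat 1"
    using gram_matrix_injective[OF full_rank_injective[THEN iffD1, OF assms]]
    by (metis matrix_left_invertible_injective)
  then have G_right: "(transpose C ** C) ** G = mat 1"
    using matrix_left_right_inverse by blast
  have "transpose G ** (transpose C ** C) = mat 1"
    using G_right by (metis matrix_transpose_mul transpose_mat transpose_transpose)
  then have G_sym: "transpose G = G"
    by (metis G_right matrix_mul_assoc matrix_mul_lid matrix_mul_rid)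
  have "mp_pinv C = G ** transpose C"
  proof (rule mp_pinv_eqI)
    show "G ** transpose C ** C = mat 1"
      using G by (simp add: matrix_mul_assoc)
    show "transpose (C ** (G ** transpose C)) = C ** (G ** transpose C)"
      by (simp add: matrix_transpose_mul G_sym matrix_mul_assoc)
  qed
  then show ?thesis
    using G by (simp add: matrix_mul_assoc)
qed

lemma yhat_eq_output:
  assumes "mp_pinv C ** C = mat 1"
  shows "yhat C A B U x0 t = C *v traj A B U x0 t"
proof (induction t)
  case 0
  then show ?case by simp
next
  case (Suc t)
  have "(C ** A ** mp_pinv C) *v (C *v x) = C *v (A *v x)" for x
    by (simp add: matrix_vector_mul_assoc matrix_mul_assoc[symmetric] assms)
  then show ?case
    using Suc by (simp add: matrix_vector_right_distrib matrix_vector_mul_assoc)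
qed

lemma spec_norm_nonneg: "spec_norm M \<ge> 0"
  unfolding spec_norm_def by (rule onorm_pos_le) simp

lemma obj_A1_residual_le:
  "norm ((C ** A ** mp_pinv C) *v ref0 C x0 r s + (C ** B) *v U s - r (Suc s))
     \<le> spec_norm (C ** A ** mp_pinv C) * norm (yhat C A B U x0 s - ref0 C x0 r s)
       + norm (yhat C A B U x0 (Suc s) - r (Suc s))"
proof -
  let ?M = "C ** A ** mp_pinv C" and ?y = "yhat C A B U x0"
  have "?M *v ref0 C x0 r s + (C ** B) *v U s - r (Suc s)
      = ?M *v (ref0 C x0 r s - ?y s) + (?y (Suc s) - r (Suc s))"
    by (simp add: matrix_vector_mult_diff_distrib algebra_simps)
  also have "norm \<dots> \<le> norm (?M *v (ref0 C x0 r s - ?y s)) + norm (?y (Suc s) - r (Suc s))"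
    by (rule norm_triangle_ineq)
  also have "norm (?M *v (ref0 C x0 r s - ?y s)) \<le> spec_norm ?M * norm (ref0 C x0 r s - ?y s)"
    unfolding spec_norm_def by (rule onorm) simp
  finally show ?thesis
    by (simp add: norm_minus_commute)
qed

lemma obj_A1_le_yhat_errors:
  "obj_A1 N B C x0 r A U
     \<le> (1 + spec_norm (C ** A ** mp_pinv C)) * (\<Sum>t=1..N. norm (yhat C A B U x0 t - r t))"
proof -
  define k where "k = spec_norm (C ** A ** mp_pinv C)"
  define e where "e t = norm (yhat C A B U x0 t - ref0 C x0 r t)" for t
  have k_nonneg: "k \<ge> 0"
    unfolding k_def by (rule spec_norm_nonneg)
  have e_Suc: "e (Suc s) = norm (yhat C A B U x0 (Suc s) - r (Suc s))" for s
    by (simp add: e_def ref0_def)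
  have e_0: "e 0 = 0"
    by (simp add: e_def ref0_def)
  have "(\<Sum>s<N. e s) \<le> (\<Sum>s<Suc N. e s)"
    by (simp add: e_def)
  also have "\<dots> = (\<Sum>s<N. e (Suc s))"
    by (simp only: sum.lessThan_Suc_shift e_0 add_0_left)
  finally have shifted_errors: "(\<Sum>s<N. e s) \<le> (\<Sum>s<N. e (Suc s))" .
  have "obj_A1 N B C x0 r A U
      = (\<Sum>s<N. norm ((C ** A ** mp_pinv C) *v ref0 C x0 r s + (C ** B) *v U s - r (Suc s)))"
    unfolding obj_A1_def One_nat_def sum.atLeast1_atMost_eq by simp
  also have "\<dots> \<le> (\<Sum>s<N. k * e s + e (Suc s))"
    using obj_A1_residual_le[of C A x0 r _ B U] by (intro sum_mono) (simp add: k_def e_def ref0_def)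
  also have "\<dots> = k * (\<Sum>s<N. e s) + (\<Sum>s<N. e (Suc s))"
    by (simp add: sum.distrib sum_distrib_left)
  also have "\<dots> \<le> (1 + k) * (\<Sum>s<N. e (Suc s))"
    using shifted_errors k_nonneg by (simp add: distrib_right mult_left_mono)
  also have "(\<Sum>s<N. e (Suc s)) = (\<Sum>t=1..N. norm (yhat C A B U x0 t - r t))"
    unfolding One_nat_def sum.atLeast1_atMost_eq e_Suc ..
  finally show ?thesis
    by (simp add: k_def)
qed

lemma optimal_mem_Z_eps:
  assumes "(As, Us) \<in> F_M1 S N B C x0 r"
  shows "(As, Us) \<in> Z_eps S N B C x0 r (eps_star B C x0 r As Us)"
  using assms by (auto simp: Z_eps_def eps_star_def F_M1_def)

lemma INF_obj_M1_eq_optimal: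
  assumes "(As, Us) \<in> F_M1 S N B C x0 r"
  shows "(INF (A, U)\<in>S. obj_M1 N B C x0 r A U) = obj_M1 N B C x0 r As Us"
  using assms unfolding F_M1_def by (intro cInf_eq_minimum) auto

lemma INF_obj_A1_le:
  assumes "(A, U) \<in> S"
  shows "(INF (A, U)\<in>S. obj_A1 N B C x0 r A U) \<le> obj_A1 N B C x0 r A U"
proof -
  have "bdd_below ((\<lambda>(A, U). obj_A1 N B C x0 r A U) ` S)"
    by (rule bdd_belowI[where m = 0]) (auto simp: obj_A1_def intro: sum_nonneg)
  from cINF_lower[OF this assms] show ?thesis
    by simp
qed

lemma sum_yhat_errors_le_obj_M1:
  assumes "mp_pinv C ** C = mat 1"
    and "(A, U) \<in> Z_eps S N B C x0 r (eps_star B C x0 r As Us)"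
  shows "(\<Sum>t=1..N. norm (yhat C A B U x0 t - r t)) \<le> obj_M1 N B C x0 r As Us"
proof -
  have "(\<Sum>t=1..N. norm (yhat C A B U x0 t - r t)) \<le> (\<Sum>t=1..N. eps_star B C x0 r As Us t)"
    using assms(2) by (intro sum_mono) (auto simp: Z_eps_def)
  also have "\<dots> = obj_M1 N B C x0 r As Us"
    by (simp add: eps_star_def obj_M1_def yhat_eq_output[OF assms(1)])
  finally show ?thesis .
qed

lemma le_one_plus_INF_INF_mult:
  fixes a v :: real and k :: "'c \<Rightarrow> 'd \<Rightarrow> real"
  assumes "P \<noteq> {}" and "\<And>p q. (p, q) \<in> P \<Longrightarrow> Q p q \<noteq> {}" and "v \<ge> 0"
    and bound: "\<And>p q x y. (p, q) \<in> P \<Longrightarrow> (x, y) \<in> Q p q \<Longrightarrow> a \<le> (1 + k x y) * v"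
  shows "a \<le> (1 + (INF (p, q)\<in>P. INF (x, y)\<in>Q p q. k x y)) * v"
proof (cases "v = 0")
  case True
  obtain p q x y where "(p, q) \<in> P" "(x, y) \<in> Q p q"
    using assms(1,2) by fastforce
  then show ?thesis
    using bound True by fastforce
next
  case False
  then have "v > 0"
    using \<open>v \<ge> 0\<close> by simp
  have "a / v - 1 \<le> (INF (p, q)\<in>P. INF (x, y)\<in>Q p q. k x y)"
  proof (intro cINF_greatest, goal_cases)
    case 1 show ?case using assms(1) .
  next
    case (2 pq)
    then obtain p q where pq: "pq = (p, q)" "(p, q) \<in> P"
      by (cases pq) auto
    show ?case
      unfolding pq(1) prod.case
    proof (rule cINF_greatest)
      show "Q p q \<noteq> {}"
        using assms(2) pq(2) .
      fix xy
      assume "xy \<in> Q p q"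
      then show "a / v - 1 \<le> (case xy of (x, y) \<Rightarrow> k x y)"
        using bound pq(2) \<open>v > 0\<close> by (cases xy) (simp add: field_simps)
    qed
  qed
  then show ?thesis
    using \<open>v > 0\<close> by (simp add: field_simps)
qed

theorem theorem5:
  fixes B :: "real^'m^'n" and C :: "real^'n^'p" and x0 :: "real^'n"
    and r :: "nat \<Rightarrow> real^'p" and N :: nat
    and S :: "((real^'n^'n) \<times> (nat \<Rightarrow> real^'m)) set"
  assumes "N \<ge> 1"
    and "rank C = CARD('n)"
    and "F_M1 S N B C x0 r \<noteq> {}"
  shows "(INF (A, U)\<in>S. obj_A1 N B C x0 r A U)
          \<le> (1 + (INF (As, Us)\<in>F_M1 S N B C x0 r.
                     INF (A, U)\<in>Z_eps S N B C x0 r (eps_star B C x0 r As Us). spec_norm (C ** A ** mp_pinv C)))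
            * (INF (A, U)\<in>S. obj_M1 N B C x0 r A U)"
proof (rule le_one_plus_INF_INF_mult)
  have pinv: "mp_pinv C ** C = mat 1"
    using assms(2) by (rule mp_pinv_left_inverse)
  obtain As0 Us0 where opt0: "(As0, Us0) \<in> F_M1 S N B C x0 r"
    using assms(3) by auto
  show "F_M1 S N B C x0 r \<noteq> {}" by (fact assms(3))
  show "Z_eps S N B C x0 r (eps_star B C x0 r As Us) \<noteq> {}" if "(As, Us) \<in> F_M1 S N B C x0 r" for As Us
    using optimal_mem_Z_eps[OF that] by blast
  show "(INF (A, U)\<in>S. obj_M1 N B C x0 r A U) \<ge> 0"
    using INF_obj_M1_eq_optimal[OF opt0] by (simp add: obj_M1_def sum_nonneg)
  fix As Us A U
  assume opt: "(As, Us) \<in> F_M1 S N B C x0 r"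
    and Z: "(A, U) \<in> Z_eps S N B C x0 r (eps_star B C x0 r As Us)"
  have "(A, U) \<in> S"
    using Z by (simp add: Z_eps_def)
  then have "(INF (A, U)\<in>S. obj_A1 N B C x0 r A U) \<le> obj_A1 N B C x0 r A U"
    by (rule INF_obj_A1_le)
  also have "\<dots> \<le> (1 + spec_norm (C ** A ** mp_pinv C)) * (\<Sum>t=1..N. norm (yhat C A B U x0 t - r t))"
    by (rule obj_A1_le_yhat_errors)
  also have "\<dots> \<le> (1 + spec_norm (C ** A ** mp_pinv C)) * obj_M1 N B C x0 r As Us"
    using sum_yhat_errors_le_obj_M1[OF pinv Z] spec_norm_nonneg[of "C ** A ** mp_pinv C"]
    by (intro mult_left_mono) simp_all
  finally show "(INF (A, U)\<in>S. obj_A1 N B C x0 r A U)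
      \<le> (1 + spec_norm (C ** A ** mp_pinv C)) * (INF (A, U)\<in>S. obj_M1 N B C x0 r A U)"
    by (simp add: INF_obj_M1_eq_optimal[OF opt])
qed

end
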